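(* Let $X$ have the $\Gamma(\alpha,\theta)$ distribution with shape $\alpha>0$ and scale $\theta>0$ (density $x^{\alpha-1}e^{-x/\theta}/(\Gamma(\alpha)\theta^\alpha)$, $x\geq0$), and let $Y$ have the $\Gamma(\alpha,1)$ distribution. Then for each fixed $x\geq 0$, $$\lim_{s\to+\infty}\overline{T}_{X,s}(x)=\lim_{s\to+\infty}\overline{T}_{Y,s}\left(\frac{x}{\theta}\right)=e^{-x/\theta}.$$
   Context: For a nonnegative absolutely continuous random variable $Z$ with density $f_Z$, set $\overline{T}_{Z,0}=f_Z$, $\mu_{Z,0}=1$, and for integers $s\geq 1$ define recursively $\overline{T}_{Z,s}(x)=\frac{1}{\mu_{Z,s-1}}\int_x^\infty\overline{T}_{Z,s-1}(t)\,dt$ and $\mu_{Z,s}=\int_0^\infty\overline{T}_{Z,s}(t)\,dt$. $\overline{T}_{Z,s}$ is the tail (survival function) of the $s$-iterated distribution induced by $Z$. Limits are over integers $s$. *)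

theory Defs
  imports "HOL-Analysis.Analysis"
begin

definition gamma_density :: "real \<Rightarrow> real \<Rightarrow> real \<Rightarrow> real" where
  "gamma_density a th x =
     (if 0 \<le> x then x powr (a - 1) * exp (- x / th) / (Gamma a * th powr a) else 0)"

text \<open>Simultaneous recursion: iter_pair f s = (T_{Z,s}, mu_{Z,s}) for the density f of Z.\<close>
primrec iter_pair :: "(real \<Rightarrow> real) \<Rightarrow> nat \<Rightarrow> (real \<Rightarrow> real) \<times> real" where
  "iter_pair f 0 = (f, 1)"
| "iter_pair f (Suc s) =
     (let T = fst (iter_pair f s); m = snd (iter_pair f s);
          T' = (\<lambda>x. (1 / m) * (LBINT t:{x..}. T t))
      in (T', LBINT t:{0..}. T' t))"

definition iter_tail :: "(real \<Rightarrow> real) \<Rightarrow> nat \<Rightarrow> real \<Rightarrow> real" where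
  "iter_tail f s = fst (iter_pair f s)"

definition iter_mean :: "(real \<Rightarrow> real) \<Rightarrow> nat \<Rightarrow> real" where
  "iter_mean f s = snd (iter_pair f s)"

end

theory Submission
  imports Defs "HOL-Real_Asymp.Real_Asymp"
begin

(* For x >= 0, Tonelli's theorem identifies the iterated tails with normalised shifted moments:
   T_{s+1}(x) = E[(Z - x)_+^s] / E[Z^s].  For the Gamma density the substitution t = x + u turns
   this into exp(-x/th) times the ratio of the integrals of u^s (x + u)^(a-1) exp(-u/th) and
   u^(s+a-1) exp(-u/th) over u > 0.  As s grows the weight u^s exp(-u/th) moves out to infinity,
   where (x + u)^(a-1) ~ u^(a-1), so the ratio tends to 1.  Quantitatively, the tangent line of
   u^(a-1) gives the lower bound for a <= 1, and splitting x + u according to x <= d u gives the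
   upper bound for a > 1, using Gamma(s+1) / Gamma(s+a) ~ s^(1-a). *)

lemma set_integral_eq_enn2real_nn_integral:
  fixes g :: "real \<Rightarrow> real"
  assumes "g \<in> borel_measurable borel" "A \<in> sets borel" "\<And>t. t \<in> A \<Longrightarrow> 0 \<le> g t"
  shows "(LBINT t:A. g t) = enn2real (\<integral>\<^sup>+t\<in>A. ennreal (g t) \<partial>lborel)"
proof -
  have "(LBINT t:A. g t) = enn2real (\<integral>\<^sup>+t. ennreal (indicator A t * g t) \<partial>lborel)"
    unfolding set_lebesgue_integral_def real_scaleR_def using assms
    by (intro integral_eq_nn_integral) (auto split: split_indicator)
  also have "(\<integral>\<^sup>+t. ennreal (indicator A t * g t) \<partial>lborel) = (\<integral>\<^sup>+t\<in>A. ennreal (g t) \<partial>lborel)"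
    by (intro nn_integral_cong) (auto split: split_indicator)
  finally show ?thesis .
qed

lemma nn_integral_diff_power_Icc:
  assumes "x \<le> t"
  shows "(\<integral>\<^sup>+y\<in>{x..t}. ennreal ((t - y) ^ n) \<partial>lborel) = ennreal ((t - x) ^ Suc n / Suc n)"
proof -
  have "((\<lambda>y. - ((t - y) ^ Suc n) / Suc n) has_real_derivative (t - y) ^ n) (at y)" for y
    by (rule derivative_eq_intros refl | simp del: of_nat_Suc)+
  then have "(\<integral>\<^sup>+y\<in>{x..t}. ennreal ((t - y) ^ n) \<partial>lborel)
      = ennreal (- ((t - t) ^ Suc n) / Suc n - - ((t - x) ^ Suc n) / Suc n)"
    using assms by (intro nn_integral_FTC_Icc) auto
  then show ?thesis by simp
qed

definition shifted_moment :: "(real \<Rightarrow> real) \<Rightarrow> nat \<Rightarrow> real \<Rightarrow> ennreal" where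
  "shifted_moment f n x = (\<integral>\<^sup>+t\<in>{x..}. ennreal ((t - x) ^ n * f t) \<partial>lborel)"

lemma shifted_moment_measurable [measurable]:
  assumes [measurable]: "f \<in> borel_measurable borel"
  shows "shifted_moment f n \<in> borel_measurable borel"
proof -
  have [measurable]: "Measurable.pred (borel \<Otimes>\<^sub>M borel) (\<lambda>p::real \<times> real. snd p \<in> {fst p..})"
    unfolding atLeast_iff by measurable
  show ?thesis
    unfolding shifted_moment_def by measurable
qed

lemma shifted_moment_le_shifted_moment_0:
  assumes "\<And>t. 0 \<le> f t" and "0 \<le> x"
  shows "shifted_moment f n x \<le> shifted_moment f n 0"
  unfolding shifted_moment_def using assms
  by (intro nn_integral_mono)
     (auto intro!: ennreal_leI mult_right_mono power_mono split: split_indicator)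

lemma shifted_moment_0_neq_zero:
  assumes [measurable]: "f \<in> borel_measurable borel" and f_nonneg: "\<And>t. 0 \<le> f t"
    and nonzero: "shifted_moment f 0 0 \<noteq> 0"
  shows "shifted_moment f n 0 \<noteq> 0"
proof
  assume "shifted_moment f n 0 = 0"
  then have "AE t in lborel. ennreal (t ^ n * f t) * indicator {0..} t = 0"
    unfolding shifted_moment_def by (subst (asm) nn_integral_0_iff_AE) auto
  then have "AE t in lborel. ennreal (f t) * indicator {0..} t = 0"
    using AE_lborel_singleton[of 0]
    by eventually_elim (auto simp: ennreal_mult f_nonneg split: split_indicator)
  then have "shifted_moment f 0 0 = 0"
    unfolding shifted_moment_def by (simp add: nn_integral_0_iff_AE)
  with nonzero show False ..
qed

lemma nn_integral_shifted_moment: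
  assumes [measurable]: "f \<in> borel_measurable borel" and f_nonneg: "\<And>t. 0 \<le> f t"
  shows "(\<integral>\<^sup>+y\<in>{x..}. shifted_moment f n y \<partial>lborel)
       = ennreal (1 / Suc n) * shifted_moment f (Suc n) x"
proof -
  have "(\<integral>\<^sup>+y\<in>{x..}. shifted_moment f n y \<partial>lborel)
      = (\<integral>\<^sup>+y. \<integral>\<^sup>+t. ennreal (if x \<le> y \<and> y \<le> t then (t - y) ^ n * f t else 0) \<partial>lborel \<partial>lborel)"
    unfolding shifted_moment_def
    by (auto simp: nn_integral_multc[symmetric] intro!: nn_integral_cong split: split_indicator)
  also have "\<dots> = (\<integral>\<^sup>+t. \<integral>\<^sup>+y. ennreal (if x \<le> y \<and> y \<le> t then (t - y) ^ n * f t else 0) \<partial>lborel \<partial>lborel)"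
    by (rule lborel_pair.Fubini') measurable
  also have "\<dots> = (\<integral>\<^sup>+t\<in>{x..}. ennreal (f t) * (\<integral>\<^sup>+y\<in>{x..t}. ennreal ((t - y) ^ n) \<partial>lborel) \<partial>lborel)"
  proof -
    have "ennreal (if x \<le> y \<and> y \<le> t then (t - y) ^ n * f t else 0)
        = ennreal (f t) * indicator {x..} t * (ennreal ((t - y) ^ n) * indicator {x..t} y)" for t y
      by (auto simp: f_nonneg ennreal_mult mult.commute split: split_indicator)
    then show ?thesis
      by (simp add: nn_integral_cmult mult_ac)
  qed
  also have "\<dots> = (\<integral>\<^sup>+t\<in>{x..}. ennreal (1 / Suc n) * ennreal ((t - x) ^ Suc n * f t) \<partial>lborel)"
    by (intro nn_integral_cong)
       (auto simp: nn_integral_diff_power_Icc f_nonneg ennreal_mult'[symmetric] split: split_indicator)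
  also have "\<dots> = ennreal (1 / Suc n) * shifted_moment f (Suc n) x"
    unfolding shifted_moment_def by (simp add: nn_integral_cmult mult.assoc)
  finally show ?thesis .
qed

lemma set_integral_shifted_moment:
  assumes [measurable]: "f \<in> borel_measurable borel" and f_nonneg: "\<And>t. 0 \<le> f t"
    and finite: "shifted_moment f n 0 < \<infinity>" and "0 \<le> x"
  shows "(LBINT t:{x..}. enn2real (shifted_moment f n t)) = enn2real (shifted_moment f (Suc n) x) / Suc n"
proof -
  have "(LBINT t:{x..}. enn2real (shifted_moment f n t))
      = enn2real (\<integral>\<^sup>+t\<in>{x..}. ennreal (enn2real (shifted_moment f n t)) \<partial>lborel)"
    by (rule set_integral_eq_enn2real_nn_integral) auto
  also have "(\<integral>\<^sup>+t\<in>{x..}. ennreal (enn2real (shifted_moment f n t)) \<partial>lborel)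
      = (\<integral>\<^sup>+t\<in>{x..}. shifted_moment f n t \<partial>lborel)"
  proof (intro nn_integral_cong)
    fix t
    have "t \<in> {x..} \<Longrightarrow> shifted_moment f n t < \<infinity>"
      using shifted_moment_le_shifted_moment_0[of f t n] f_nonneg finite \<open>0 \<le> x\<close> by simp
    then show "ennreal (enn2real (shifted_moment f n t)) * indicator {x..} t
        = shifted_moment f n t * indicator {x..} t"
      by (auto split: split_indicator)
  qed
  also have "\<dots> = ennreal (1 / Suc n) * shifted_moment f (Suc n) x"
    by (rule nn_integral_shifted_moment) (use f_nonneg in auto)
  finally show ?thesis
    by (simp add: enn2real_mult)
qed

theorem iter_tail_Suc_eq_shifted_moment_ratio:
  assumes [measurable]: "f \<in> borel_measurable borel" and f_nonneg: "\<And>t. 0 \<le> f t"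
    and density: "shifted_moment f 0 0 = 1" and finite: "\<And>n. shifted_moment f n 0 < \<infinity>"
    and "0 \<le> x"
  shows "iter_tail f (Suc n) x = enn2real (shifted_moment f n x) / enn2real (shifted_moment f n 0)"
  using \<open>0 \<le> x\<close>
proof (induction n arbitrary: x)
  case 0
  have "iter_tail f 1 x = (LBINT t:{x..}. f t)"
    by (simp add: iter_tail_def)
  also have "\<dots> = enn2real (shifted_moment f 0 x)"
    unfolding shifted_moment_def
    by (simp add: set_integral_eq_enn2real_nn_integral f_nonneg)
  finally show ?case
    by (simp add: density)
next
  case (Suc n)
  define c where "c = enn2real (shifted_moment f n 0)"
  have "c > 0"
    using shifted_moment_0_neq_zero[of f n] f_nonneg finite[of n] density
    by (simp add: c_def enn2real_positive_iff less_top[symmetric] zero_less_iff_neq_zero)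
  have integral: "(LBINT t:{y..}. iter_tail f (Suc n) t) = enn2real (shifted_moment f (Suc n) y) / (Suc n * c)"
    if "0 \<le> y" for y
  proof -
    have "(LBINT t:{y..}. iter_tail f (Suc n) t) = (LBINT t:{y..}. enn2real (shifted_moment f n t) / c)"
      using that by (intro set_lebesgue_integral_cong) (auto simp: Suc.IH c_def)
    also have "\<dots> = enn2real (shifted_moment f (Suc n) y) / (Suc n * c)"
      using set_integral_shifted_moment[OF _ f_nonneg finite that] by simp
    finally show ?thesis .
  qed
  have "iter_tail f (Suc (Suc n)) x
      = (LBINT t:{x..}. iter_tail f (Suc n) t) / (LBINT t:{0..}. iter_tail f (Suc n) t)"
    by (simp add: iter_tail_def iter_mean_def Let_def)
  also have "\<dots> = enn2real (shifted_moment f (Suc n) x) / enn2real (shifted_moment f (Suc n) 0)"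
    using \<open>c > 0\<close> by (simp add: integral Suc.prems)
  finally show ?case .
qed

lemma powr_add_ge_tangent:
  fixes b u x :: real
  assumes "b \<le> 0" and "0 < u" and "0 \<le> x"
  shows "u powr b + b * x * u powr (b - 1) \<le> (x + u) powr b"
proof (cases "x = 0")
  case False
  then have "u < x + u"
    using \<open>0 \<le> x\<close> by simp
  then obtain z where z: "u < z" "z < x + u" and mvt: "(x + u) powr b - u powr b = x * (b * z powr (b - 1))"
    using MVT2[of u "x + u" "\<lambda>s. s powr b" "\<lambda>s. b * s powr (b - 1)"] \<open>0 < u\<close>
    by (force intro: has_real_derivative_powr)
  have "z powr (b - 1) \<le> u powr (b - 1)"
    using z assms by (intro powr_mono2') auto
  then have "x * b * u powr (b - 1) \<le> x * b * z powr (b - 1)"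
    using assms by (intro mult_left_mono_neg) (auto simp: mult_nonneg_nonpos)
  then show ?thesis
    using mvt by (simp add: algebra_simps)
qed simp

lemma powr_add_le_split:
  fixes b u x d :: real
  assumes "0 \<le> b" and "0 \<le> u" and "0 \<le> x" and "0 < d"
  shows "(x + u) powr b \<le> (1 + d) powr b * u powr b + (1 + 1 / d) powr b * x powr b"
proof (cases "x \<le> d * u")
  case True
  then have "(x + u) powr b \<le> ((1 + d) * u) powr b"
    using assms by (intro powr_mono2) (auto simp: algebra_simps)
  also have "\<dots> = (1 + d) powr b * u powr b"
    using assms by (simp add: powr_mult)
  finally show ?thesis
    by (smt (verit) mult_nonneg_nonneg powr_ge_zero)
next
  case False
  then have "(x + u) powr b \<le> ((1 + 1 / d) * x) powr b"
    using assms by (intro powr_mono2) (auto simp: algebra_simps field_simps)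
  also have "\<dots> = (1 + 1 / d) powr b * x powr b"
    using assms by (simp add: powr_mult)
  finally show ?thesis
    by (smt (verit) mult_nonneg_nonneg powr_ge_zero)
qed

lemma nn_set_integral_le_lincomb:
  fixes f g h :: "real \<Rightarrow> real"
  assumes [measurable]: "g \<in> borel_measurable borel" "h \<in> borel_measurable borel" "A \<in> sets borel"
    and le: "\<And>u. u \<in> A \<Longrightarrow> f u \<le> c * g u + e * h u"
    and "\<And>u. u \<in> A \<Longrightarrow> 0 \<le> g u" "\<And>u. u \<in> A \<Longrightarrow> 0 \<le> h u" "0 \<le> c" "0 \<le> e"
  shows "(\<integral>\<^sup>+u\<in>A. ennreal (f u) \<partial>lborel)
       \<le> ennreal c * (\<integral>\<^sup>+u\<in>A. ennreal (g u) \<partial>lborel) + ennreal e * (\<integral>\<^sup>+u\<in>A. ennreal (h u) \<partial>lborel)"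
proof -
  have "ennreal (f u) * indicator A u
      \<le> ennreal c * (ennreal (g u) * indicator A u) + ennreal e * (ennreal (h u) * indicator A u)" for u
  proof (cases "u \<in> A")
    case True
    have "ennreal (f u) \<le> ennreal (c * g u + e * h u)"
      using le[OF True] by (rule ennreal_leI)
    also have "\<dots> = ennreal c * ennreal (g u) + ennreal e * ennreal (h u)"
      using True assms by (simp add: ennreal_plus ennreal_mult)
    finally show ?thesis
      using True by simp
  qed simp
  then have "(\<integral>\<^sup>+u\<in>A. ennreal (f u) \<partial>lborel)
      \<le> (\<integral>\<^sup>+u. ennreal c * (ennreal (g u) * indicator A u) + ennreal e * (ennreal (h u) * indicator A u) \<partial>lborel)"
    by (intro nn_integral_mono)
  also have "\<dots> = ennreal c * (\<integral>\<^sup>+u\<in>A. ennreal (g u) \<partial>lborel) + ennreal e * (\<integral>\<^sup>+u\<in>A. ennreal (h u) \<partial>lborel)"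
    by (subst nn_integral_add) (simp_all add: nn_integral_cmult)
  finally show ?thesis .
qed

lemma nn_integral_gamma_kernel:
  fixes c th :: real
  assumes "0 < c" and "0 < th"
  shows "(\<integral>\<^sup>+u\<in>{0<..}. ennreal (u powr (c - 1) * exp (- u / th)) \<partial>lborel) = ennreal (Gamma c * th powr c)"
proof -
  let ?g = "\<lambda>u. ennreal (u powr (c - 1) * exp (- u / th)) * indicator {0<..} u"
  have "(\<integral>\<^sup>+u. ?g u \<partial>lborel) = ennreal \<bar>th\<bar> * (\<integral>\<^sup>+v. ?g (0 + th * v) \<partial>lborel)"
    using \<open>0 < th\<close> by (intro nn_integral_real_affine) auto
  also have "(\<lambda>v. ?g (0 + th * v)) = (\<lambda>v. ennreal (th powr (c - 1)) * ennreal (indicator {0..} v * v powr (c - 1) / exp v))"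
  proof
    fix v :: real
    show "?g (0 + th * v) = ennreal (th powr (c - 1)) * ennreal (indicator {0..} v * v powr (c - 1) / exp v)"
      using \<open>0 < th\<close>
      by (cases v "0 :: real" rule: linorder_cases)
         (simp_all add: ennreal_mult[symmetric] powr_mult exp_minus field_simps zero_less_mult_iff)
  qed
  also have "ennreal \<bar>th\<bar> * (\<integral>\<^sup>+v. ennreal (th powr (c - 1)) * ennreal (indicator {0..} v * v powr (c - 1) / exp v) \<partial>lborel)
      = ennreal (th * th powr (c - 1) * Gamma c)"
    using assms by (simp add: nn_integral_cmult Gamma_conv_nn_integral_real[symmetric] ennreal_mult mult.assoc)
  also have "th * th powr (c - 1) = th powr c"
    using \<open>0 < th\<close> by (simp add: powr_diff)
  finally show ?thesis
    by (simp add: mult.commute)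
qed

lemma Gamma_ratio_tendsto:
  fixes a :: real
  assumes "0 < a"
  shows "(\<lambda>n. Gamma (real n + 1) * real n powr (a - 1) / Gamma (n + a)) \<longlonglongrightarrow> 1"
proof -
  have "a \<notin> \<int>\<^sub>\<le>\<^sub>0"
    using assms by (auto elim!: nonpos_Ints_cases)
  have "Gamma a \<noteq> 0"
    using Gamma_real_pos[OF assms] by simp
  have "(\<lambda>n. Gamma_series' a n / Gamma a) \<longlonglongrightarrow> Gamma a / Gamma a"
    by (intro tendsto_divide Gamma_series'_LIMSEQ tendsto_const \<open>Gamma a \<noteq> 0\<close>)
  then have "(\<lambda>n. Gamma_series' a n / Gamma a) \<longlonglongrightarrow> 1"
    using \<open>Gamma a \<noteq> 0\<close> by simp
  moreover have "\<forall>\<^sub>F n in sequentially. Gamma_series' a n / Gamma a = Gamma (real n + 1) * real n powr (a - 1) / Gamma (n + a)"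
    using eventually_ge_at_top[of 1]
  proof eventually_elim
    case (elim n)
    then obtain m where m: "n = Suc m"
      by (cases n) auto
    have "Gamma (1 + real n) = fact n"
      by (rule Gamma_fact)
    then have "Gamma (real n + 1) * real n powr (a - 1) = fact m * n powr a"
      using m by (simp add: powr_diff add.commute)
    then show ?case
      unfolding Gamma_series'_def pochhammer_Gamma[OF \<open>a \<notin> \<int>\<^sub>\<le>\<^sub>0\<close>] using m \<open>Gamma a \<noteq> 0\<close>
      by (simp add: powr_def add.commute)
  qed
  ultimately show ?thesis
    by (rule Lim_transform_eventually)
qed

lemma gamma_density_measurable [measurable]: "gamma_density a th \<in> borel_measurable borel"
  unfolding gamma_density_def by measurable

lemma gamma_density_nonneg: "0 < a \<Longrightarrow> 0 < th \<Longrightarrow> 0 \<le> gamma_density a th t"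
  unfolding gamma_density_def by simp

definition shifted_gamma_integral :: "real \<Rightarrow> real \<Rightarrow> nat \<Rightarrow> real \<Rightarrow> ennreal" where
  "shifted_gamma_integral a th n x =
     (\<integral>\<^sup>+u\<in>{0<..}. ennreal (u ^ n * (x + u) powr (a - 1) * exp (- u / th)) \<partial>lborel)"

lemma shifted_moment_gamma_density:
  assumes "0 < a" and "0 < th" and "0 \<le> x"
  shows "shifted_moment (gamma_density a th) n x
       = ennreal (exp (- x / th) / (Gamma a * th powr a)) * shifted_gamma_integral a th n x"
proof -
  let ?g = "\<lambda>t. ennreal ((t - x) ^ n * gamma_density a th t) * indicator {x..} t"
  let ?K = "exp (- x / th) / (Gamma a * th powr a)"
  have "shifted_moment (gamma_density a th) n x = ennreal \<bar>1\<bar> * (\<integral>\<^sup>+u. ?g (x + 1 * u) \<partial>lborel)"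
    unfolding shifted_moment_def by (intro nn_integral_real_affine) auto
  also have "\<dots> = (\<integral>\<^sup>+u. ennreal \<bar>1\<bar> * ?g (x + 1 * u) \<partial>lborel)"
    by (simp add: nn_integral_cmult)
  also have "\<dots> = (\<integral>\<^sup>+u. ennreal ?K * (ennreal (u ^ n * (x + u) powr (a - 1) * exp (- u / th)) * indicator {0<..} u) \<partial>lborel)"
  proof (intro nn_integral_cong_AE)
    have exp_split: "exp ((- x - u) / th) = exp (- (x / th)) * exp (- (u / th))" for u
      by (simp add: exp_add[symmetric] diff_divide_distrib)
    show "AE u in lborel. ennreal \<bar>1\<bar> * ?g (x + 1 * u)
        = ennreal ?K * (ennreal (u ^ n * (x + u) powr (a - 1) * exp (- u / th)) * indicator {0<..} u)"
      using AE_lborel_singleton[of 0]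
      by eventually_elim
         (use assms in \<open>auto simp: gamma_density_def exp_split ennreal_mult[symmetric] split: split_indicator\<close>)
  qed
  also have "\<dots> = ennreal ?K * shifted_gamma_integral a th n x"
    unfolding shifted_gamma_integral_def by (rule nn_integral_cmult) measurable
  finally show ?thesis .
qed

lemma shifted_gamma_integral_0:
  assumes "0 < a" and "0 < th"
  shows "shifted_gamma_integral a th n 0 = ennreal (Gamma (n + a) * th powr (n + a))"
proof -
  have "u ^ n * (0 + u) powr (a - 1) = u powr (n + a - 1)" if "0 < u" for u :: real
    using that by (simp add: powr_realpow[symmetric] powr_add[symmetric] add_diff_eq)
  then have "shifted_gamma_integral a th n 0
      = (\<integral>\<^sup>+u\<in>{0<..}. ennreal (u powr (n + a - 1) * exp (- u / th)) \<partial>lborel)"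
    unfolding shifted_gamma_integral_def by (intro nn_integral_cong) (auto split: split_indicator)
  also have "\<dots> = ennreal (Gamma (n + a) * th powr (n + a))"
    using assms by (intro nn_integral_gamma_kernel) auto
  finally show ?thesis .
qed

lemma shifted_moment_gamma_density_0:
  assumes "0 < a" and "0 < th"
  shows "shifted_moment (gamma_density a th) n 0 = ennreal (Gamma (n + a) * th powr (n + a) / (Gamma a * th powr a))"
  using shifted_moment_gamma_density[OF assms order_refl] shifted_gamma_integral_0[OF assms] assms
  by (simp add: ennreal_mult[symmetric])

lemma shifted_gamma_integral_finite:
  assumes "0 < a" and "0 < th" and "0 \<le> x"
  shows "shifted_gamma_integral a th n x < \<infinity>"
proof -
  have "ennreal (exp (- x / th) / (Gamma a * th powr a)) * shifted_gamma_integral a th n x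
      \<le> shifted_moment (gamma_density a th) n 0"
    using shifted_moment_le_shifted_moment_0[of "gamma_density a th" x n] assms
    by (simp add: shifted_moment_gamma_density gamma_density_nonneg)
  also have "\<dots> < \<infinity>"
    using assms by (simp add: shifted_moment_gamma_density_0)
  finally show ?thesis
    using assms Gamma_real_pos[OF assms(1)] by (auto simp: ennreal_mult_less_top)
qed

theorem iter_tail_gamma_density:
  assumes "0 < a" and "0 < th" and "0 \<le> x"
  shows "iter_tail (gamma_density a th) (Suc n) x
       = exp (- x / th) * (enn2real (shifted_gamma_integral a th n x) / (Gamma (n + a) * th powr (n + a)))"
proof -
  have "Gamma a \<noteq> 0"
    using Gamma_real_pos[OF assms(1)] by simp
  have "iter_tail (gamma_density a th) (Suc n) x
      = enn2real (shifted_moment (gamma_density a th) n x) / enn2real (shifted_moment (gamma_density a th) n 0)"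
    using assms \<open>Gamma a \<noteq> 0\<close>
    by (intro iter_tail_Suc_eq_shifted_moment_ratio)
       (auto simp: gamma_density_nonneg shifted_moment_gamma_density_0)
  also have "\<dots> = exp (- x / th) * (enn2real (shifted_gamma_integral a th n x) / (Gamma (n + a) * th powr (n + a)))"
    using assms \<open>Gamma a \<noteq> 0\<close>
    by (simp add: shifted_moment_gamma_density shifted_gamma_integral_0 enn2real_mult)
  finally show ?thesis .
qed

lemma shifted_gamma_integral_antimono:
  assumes "a \<le> 1" and "0 \<le> x"
  shows "shifted_gamma_integral a th n x \<le> shifted_gamma_integral a th n 0"
proof -
  have "u ^ n * (x + u) powr (a - 1) * exp (- u / th) \<le> u ^ n * (0 + u) powr (a - 1) * exp (- u / th)"
    if "0 < u" for u
    using that assms by (intro mult_right_mono mult_left_mono powr_mono2') auto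
  then show ?thesis
    unfolding shifted_gamma_integral_def
    by (intro nn_integral_mono) (auto intro: ennreal_leI simp: less_eq_real_def split: split_indicator)
qed

lemma shifted_gamma_integral_mono:
  assumes "1 \<le> a" and "0 \<le> x"
  shows "shifted_gamma_integral a th n 0 \<le> shifted_gamma_integral a th n x"
proof -
  have "u ^ n * (0 + u) powr (a - 1) * exp (- u / th) \<le> u ^ n * (x + u) powr (a - 1) * exp (- u / th)"
    if "0 \<le> u" for u
    using that assms by (intro mult_right_mono mult_left_mono powr_mono2) auto
  then show ?thesis
    unfolding shifted_gamma_integral_def
    by (intro nn_integral_mono) (auto intro: ennreal_leI split: split_indicator)
qed

lemma shifted_gamma_integral_0_le:
  assumes "0 < a" and "a \<le> 1" and "0 < th" and "0 \<le> x" and "1 \<le> n"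
  shows "shifted_gamma_integral a th n 0
       \<le> shifted_gamma_integral a th n x + ennreal ((1 - a) * x) * ennreal (Gamma (n + a - 1) * th powr (n + a - 1))"
proof -
  have "u ^ n * (0 + u) powr (a - 1) * exp (- u / th)
      \<le> 1 * (u ^ n * (x + u) powr (a - 1) * exp (- u / th)) + ((1 - a) * x) * (u powr (n + a - 1 - 1) * exp (- u / th))"
    if "u \<in> {0<..}" for u
  proof -
    have "0 < u"
      using that by simp
    have "u powr (a - 1) \<le> (x + u) powr (a - 1) + (1 - a) * x * u powr (a - 1 - 1)"
      using powr_add_ge_tangent[of "a - 1" u x] \<open>0 < u\<close> assms by (simp add: algebra_simps)
    then have "u ^ n * u powr (a - 1) \<le> u ^ n * (x + u) powr (a - 1) + (1 - a) * x * (u ^ n * u powr (a - 1 - 1))"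
      using \<open>0 < u\<close> by (auto dest: mult_left_mono[of _ _ "u ^ n"] simp: algebra_simps)
    moreover have "u ^ n * u powr (a - 1 - 1) = u powr (n + a - 1 - 1)"
      using \<open>0 < u\<close> by (simp add: powr_realpow[symmetric] powr_add[symmetric] algebra_simps)
    ultimately show ?thesis
      by (auto dest: mult_right_mono[of _ _ "exp (- u / th)"] simp: algebra_simps)
  qed
  then have "shifted_gamma_integral a th n 0
      \<le> ennreal 1 * shifted_gamma_integral a th n x
         + ennreal ((1 - a) * x) * (\<integral>\<^sup>+u\<in>{0<..}. ennreal (u powr (n + a - 1 - 1) * exp (- u / th)) \<partial>lborel)"
    unfolding shifted_gamma_integral_def using assms
    by (intro nn_set_integral_le_lincomb) auto
  also have "(\<integral>\<^sup>+u\<in>{0<..}. ennreal (u powr (n + a - 1 - 1) * exp (- u / th)) \<partial>lborel)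
      = ennreal (Gamma (n + a - 1) * th powr (n + a - 1))"
    using assms by (intro nn_integral_gamma_kernel) auto
  finally show ?thesis
    by simp
qed

lemma shifted_gamma_integral_le:
  assumes "1 \<le> a" and "0 < th" and "0 \<le> x" and "0 < d"
  shows "shifted_gamma_integral a th n x
       \<le> ennreal ((1 + d) powr (a - 1)) * ennreal (Gamma (n + a) * th powr (n + a))
         + ennreal ((1 + 1 / d) powr (a - 1) * x powr (a - 1)) * ennreal (Gamma (real n + 1) * th powr (real n + 1))"
proof -
  let ?c = "(1 + d) powr (a - 1)" and ?e = "(1 + 1 / d) powr (a - 1) * x powr (a - 1)"
  have "u ^ n * (x + u) powr (a - 1) * exp (- u / th)
      \<le> ?c * (u powr (n + a - 1) * exp (- u / th)) + ?e * (u powr (real n + 1 - 1) * exp (- u / th))"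
    if "u \<in> {0<..}" for u
  proof -
    have "0 < u"
      using that by simp
    have "(x + u) powr (a - 1) \<le> ?c * u powr (a - 1) + ?e"
      using powr_add_le_split[of "a - 1" u x d] \<open>0 < u\<close> assms by (simp add: mult.assoc)
    then have "u ^ n * (x + u) powr (a - 1) * exp (- u / th)
        \<le> u ^ n * (?c * u powr (a - 1) + ?e) * exp (- u / th)"
      using \<open>0 < u\<close> by (intro mult_right_mono mult_left_mono) auto
    also have "\<dots> = ?c * ((u ^ n * u powr (a - 1)) * exp (- u / th)) + ?e * (u ^ n * exp (- u / th))"
      by (simp add: algebra_simps)
    also have "u ^ n * u powr (a - 1) = u powr (n + a - 1)"
      using \<open>0 < u\<close> by (simp add: powr_realpow[symmetric] powr_add[symmetric] algebra_simps)
    also have "u ^ n * exp (- u / th) = u powr (real n + 1 - 1) * exp (- u / th)"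
      using \<open>0 < u\<close> by (simp add: powr_realpow)
    finally show ?thesis .
  qed
  then have "shifted_gamma_integral a th n x
      \<le> ennreal ?c * (\<integral>\<^sup>+u\<in>{0<..}. ennreal (u powr (n + a - 1) * exp (- u / th)) \<partial>lborel)
         + ennreal ?e * (\<integral>\<^sup>+u\<in>{0<..}. ennreal (u powr (real n + 1 - 1) * exp (- u / th)) \<partial>lborel)"
    unfolding shifted_gamma_integral_def using assms
    by (intro nn_set_integral_le_lincomb) auto
  also have "\<dots> = ennreal ?c * ennreal (Gamma (n + a) * th powr (n + a))
      + ennreal ?e * ennreal (Gamma (real n + 1) * th powr (real n + 1))"
    using nn_integral_gamma_kernel[of "n + a" th] nn_integral_gamma_kernel[of "real n + 1" th] assms by simp
  finally show ?thesis .
qed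

lemma shifted_gamma_ratio_tendsto_shape_le_1:
  fixes a th x :: real
  assumes "0 < a" and "a \<le> 1" and "0 < th" and "0 \<le> x"
  shows "(\<lambda>n. enn2real (shifted_gamma_integral a th n x) / (Gamma (n + a) * th powr (n + a))) \<longlonglongrightarrow> 1"
proof (rule tendsto_sandwich)
  define G where "G n = Gamma (n + a) * th powr (n + a)" for n :: nat
  define J where "J n = enn2real (shifted_gamma_integral a th n x)" for n
  have G_pos: "0 < G n" for n
    using assms by (simp add: G_def)
  have J_eq: "shifted_gamma_integral a th n x = ennreal (J n)" for n
    using shifted_gamma_integral_finite[OF \<open>0 < a\<close> \<open>0 < th\<close> \<open>0 \<le> x\<close>] by (simp add: J_def)
  have "J n \<le> G n" for n
    using shifted_gamma_integral_antimono[OF \<open>a \<le> 1\<close> \<open>0 \<le> x\<close>, of th n] G_pos[of n]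
    by (simp add: J_eq shifted_gamma_integral_0[OF \<open>0 < a\<close> \<open>0 < th\<close>] G_def)
  then show "\<forall>\<^sub>F n in sequentially. J n / G n \<le> 1"
    using G_pos by simp
  show "\<forall>\<^sub>F n in sequentially. 1 - (1 - a) * x / ((n + a - 1) * th) \<le> J n / G n"
    using eventually_ge_at_top[of 1]
  proof eventually_elim
    case (elim n)
    define G' where "G' = Gamma (n + a - 1) * th powr (n + a - 1)"
    have "0 < n + a - 1"
      using elim assms by simp
    then have "n + a - 1 \<notin> \<int>\<^sub>\<le>\<^sub>0"
      by (auto dest: nonpos_Ints_nonpos)
    then have "Gamma (n + a) = (n + a - 1) * Gamma (n + a - 1)"
      using Gamma_plus1[of "n + a - 1"] by simp
    moreover have "th powr (n + a) = th * th powr (n + a - 1)"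
      using \<open>0 < th\<close> by (simp add: powr_diff)
    ultimately have G_eq: "G n = (n + a - 1) * th * G'"
      by (simp add: G_def G'_def)
    have "ennreal (G n) \<le> ennreal (J n) + ennreal ((1 - a) * x) * ennreal G'"
      using shifted_gamma_integral_0_le[OF assms elim]
      by (simp add: J_eq shifted_gamma_integral_0[OF \<open>0 < a\<close> \<open>0 < th\<close>] G_def G'_def)
    also have "\<dots> = ennreal (J n + (1 - a) * x * G')"
      using assms \<open>0 < n + a - 1\<close> by (simp add: J_def G'_def ennreal_plus ennreal_mult)
    finally have "G n - (1 - a) * x * G' \<le> J n"
      using assms \<open>0 < n + a - 1\<close> by (subst (asm) ennreal_le_iff) (auto simp: J_def G'_def)
    then have "(G n - (1 - a) * x * G') / G n \<le> J n / G n"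
      using G_pos[of n] by (intro divide_right_mono) auto
    moreover have "(G n - (1 - a) * x * G') / G n = 1 - (1 - a) * x / ((n + a - 1) * th)"
      using G_pos[of n] unfolding G_eq by (auto simp: diff_divide_distrib)
    ultimately show ?case
      by simp
  qed
  show "(\<lambda>n. 1 - (1 - a) * x / ((n + a - 1) * th)) \<longlonglongrightarrow> 1"
    using \<open>0 < th\<close> by real_asymp
qed (rule tendsto_const)

lemma shifted_gamma_ratio_tendsto_shape_gt_1:
  fixes a th x :: real
  assumes "1 < a" and "0 < th" and "0 \<le> x"
  shows "(\<lambda>n. enn2real (shifted_gamma_integral a th n x) / (Gamma (n + a) * th powr (n + a))) \<longlonglongrightarrow> 1"
proof (rule tendsto_sandwich)
  define G where "G n = Gamma (n + a) * th powr (n + a)" for n :: nat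
  define J where "J n = enn2real (shifted_gamma_integral a th n x)" for n
  define h where "h n = (1 + 1 / sqrt (real n + 1)) powr (a - 1)
    + x powr (a - 1) * th powr (1 - a) * ((1 + sqrt (real n + 1)) powr (a - 1) * Gamma (real n + 1) / Gamma (n + a))"
    for n :: nat
  have "0 < a"
    using assms by simp
  have G_pos: "0 < G n" for n
    using assms by (simp add: G_def)
  have J_eq: "shifted_gamma_integral a th n x = ennreal (J n)" for n
    using shifted_gamma_integral_finite[OF \<open>0 < a\<close> \<open>0 < th\<close> \<open>0 \<le> x\<close>] by (simp add: J_def)
  have J_nonneg: "0 \<le> J n" for n
    by (simp add: J_def)
  have "G n \<le> J n" for n
    using shifted_gamma_integral_mono[of a x th n] assms
    by (simp add: J_eq shifted_gamma_integral_0[OF \<open>0 < a\<close> \<open>0 < th\<close>] G_def J_nonneg)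
  then show "\<forall>\<^sub>F n in sequentially. 1 \<le> J n / G n"
    using G_pos by simp
  have "J n / G n \<le> h n" for n
  proof -
    \<comment> \<open>As d tends to 0 the first term of the bound tends to 1, while (1 + 1/d)^(a-1) grows
      only like n^((a-1)/2) and is beaten by Gamma(n+1) / Gamma(n+a) ~ n^(1-a).\<close>
    define d where "d = 1 / sqrt (real n + 1)"
    define H where "H = Gamma (real n + 1) * th powr (real n + 1)"
    let ?c = "(1 + d) powr (a - 1)" and ?e = "(1 + 1 / d) powr (a - 1) * x powr (a - 1)"
    have "0 < d" "0 < H"
      using \<open>0 < th\<close> by (simp_all add: d_def H_def)
    have "ennreal (J n) \<le> ennreal ?c * ennreal (G n) + ennreal ?e * ennreal H"
      using shifted_gamma_integral_le[of a th x d n] assms \<open>0 < d\<close>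
      by (simp add: J_eq G_def H_def)
    also have "\<dots> = ennreal (?c * G n + ?e * H)"
      using G_pos[of n] \<open>0 < H\<close> by (simp add: ennreal_plus ennreal_mult)
    finally have "J n \<le> ?c * G n + ?e * H"
      using G_pos[of n] \<open>0 < H\<close> by (subst (asm) ennreal_le_iff) auto
    then have "J n / G n \<le> ?c + ?e * (H / G n)"
      using G_pos[of n] by (simp add: field_simps)
    also have "H / G n = th powr (1 - a) * (Gamma (real n + 1) / Gamma (n + a))"
      using \<open>0 < th\<close> by (simp add: H_def G_def powr_diff powr_add mult_ac)
    finally show ?thesis
      by (simp add: h_def d_def mult_ac)
  qed
  then show "\<forall>\<^sub>F n in sequentially. J n / G n \<le> h n"
    by simp
  have "(\<lambda>n. (1 + sqrt (real n + 1)) powr (a - 1) * real n powr - (a - 1)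
      * (Gamma (real n + 1) * real n powr (a - 1) / Gamma (n + a))) \<longlonglongrightarrow> 0 * 1"
  proof (intro tendsto_mult Gamma_ratio_tendsto \<open>0 < a\<close>)
    have "(\<lambda>n. (1 + sqrt (real n + 1)) powr b * real n powr - b) \<longlonglongrightarrow> 0" if "0 < b" for b :: real
      using that by real_asymp
    from this[of "a - 1"] show "(\<lambda>n. (1 + sqrt (real n + 1)) powr (a - 1) * real n powr - (a - 1)) \<longlonglongrightarrow> 0"
      using \<open>1 < a\<close> by simp
  qed
  moreover have "\<forall>\<^sub>F n in sequentially. (1 + sqrt (real n + 1)) powr (a - 1) * real n powr - (a - 1)
      * (Gamma (real n + 1) * real n powr (a - 1) / Gamma (n + a))
      = (1 + sqrt (real n + 1)) powr (a - 1) * Gamma (real n + 1) / Gamma (n + a)"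
    using eventually_gt_at_top[of 0]
    by eventually_elim (simp add: powr_add[symmetric])
  ultimately have "(\<lambda>n. (1 + sqrt (real n + 1)) powr (a - 1) * Gamma (real n + 1) / Gamma (n + a)) \<longlonglongrightarrow> 0"
    by (auto intro: Lim_transform_eventually)
  moreover have "(\<lambda>n. (1 + 1 / sqrt (real n + 1)) powr (a - 1)) \<longlonglongrightarrow> 1"
    using \<open>1 < a\<close> by real_asymp
  ultimately show "h \<longlonglongrightarrow> 1"
    unfolding h_def using tendsto_add[OF _ tendsto_mult_right_zero] by fastforce
qed (rule tendsto_const)

theorem iter_tail_gamma_density_tendsto:
  fixes a th x :: real
  assumes "0 < a" and "0 < th" and "0 \<le> x"
  shows "(\<lambda>s. iter_tail (gamma_density a th) s x) \<longlonglongrightarrow> exp (- x / th)"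
proof -
  have "(\<lambda>n. enn2real (shifted_gamma_integral a th n x) / (Gamma (n + a) * th powr (n + a))) \<longlonglongrightarrow> 1"
    using shifted_gamma_ratio_tendsto_shape_le_1 shifted_gamma_ratio_tendsto_shape_gt_1 assms
    by (cases "a \<le> 1") auto
  then have "(\<lambda>n. iter_tail (gamma_density a th) (Suc n) x) \<longlonglongrightarrow> exp (- x / th)"
    unfolding iter_tail_gamma_density[OF assms] using tendsto_mult_left by fastforce
  then show ?thesis
    by (rule filterlim_sequentially_Suc[THEN iffD1])
qed

theorem corollary3:
  fixes a th x :: real
  assumes "a > 0" and "th > 0" and "x \<ge> 0"
  shows "(\<lambda>s. iter_tail (gamma_density a th) s x) \<longlonglongrightarrow> exp (- x / th)
       \<and> (\<lambda>s. iter_tail (gamma_density a 1) s (x / th)) \<longlonglongrightarrow> exp (- x / th)"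
  using iter_tail_gamma_density_tendsto[OF assms] iter_tail_gamma_density_tendsto[of a 1 "x / th"] assms
  by simp

end
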